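(* Let $S_t$ be the state at time $t$ of a $d$-dimensional Hegselmann–Krause system with social network $G=(V,E)$ and confidence bound $\varepsilon>0$. Suppose agent $v$ is updated in step $t$ (so it moves by $m_v(t)$), producing the state $S_{t+1}$. Then $$\Phi(S_t)-\Phi(S_{t+1})\ \ge\ (|N_v(t)|+1)\,\|m_v(t)\|_2^2,$$ with equality if the influence network in $S_{t+1}$ equals the influence network in $S_t$.
   Context: A $d$-dimensional Hegselmann–Krause system has a finite undirected graph $G=(V,E)$ (social network), a confidence bound $\varepsilon>0$, and positions $x_v(t)\in\mathbb{R}^d$ at time $t$. The influencing neighborhood is $N_v(t)=\{u:\{u,v\}\in E,\ \|x_u(t)-x_v(t)\|_2\le\varepsilon\}\cup\{v\}$, the movement is $m_v(t)=\frac{1}{|N_v(t)|}\sum_{u\in N_v(t)}(x_u(t)-x_v(t))$, and the influence network at time $t$ is $(V,E_I(t))$ with $E_I(t)=\{\{u,v\}\in E:\|x_u(t)-x_v(t)\|_2\le\varepsilon\}$. Updating $v$ in step $t$ means $x_v(t+1)=x_v(t)+m_v(t)$ and $x_u(t+1)=x_u(t)$ for $u\ne v$. The potential of a state $S$ with positions $x$ is $\Phi(S)=\sum_{\{u,v\}\in E}\min\{\|x_u-x_v\|_2^2,\varepsilon^2\}$. *)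

theory Defs
  imports "HOL-Analysis.Analysis"
begin

definition graph :: "'v set \<Rightarrow> 'v set set \<Rightarrow> bool" where
  "graph V E \<longleftrightarrow> finite V \<and> (\<forall>e\<in>E. e \<subseteq> V \<and> card e = 2)"

definition hk_nbhd :: "'v set set \<Rightarrow> real \<Rightarrow> ('v \<Rightarrow> 'a::euclidean_space) \<Rightarrow> 'v \<Rightarrow> 'v set" where
  "hk_nbhd E eps x v = {u. {u, v} \<in> E \<and> norm (x u - x v) \<le> eps} \<union> {v}"

definition hk_move :: "'v set set \<Rightarrow> real \<Rightarrow> ('v \<Rightarrow> 'a::euclidean_space) \<Rightarrow> 'v \<Rightarrow> 'a" where
  "hk_move E eps x v =
     (1 / real (card (hk_nbhd E eps x v))) *\<^sub>R (\<Sum>u\<in>hk_nbhd E eps x v. x u - x v)"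

definition hk_update :: "'v set set \<Rightarrow> real \<Rightarrow> ('v \<Rightarrow> 'a::euclidean_space) \<Rightarrow> 'v \<Rightarrow> ('v \<Rightarrow> 'a)" where
  "hk_update E eps x v = x(v := x v + hk_move E eps x v)"

definition influence_edges :: "'v set set \<Rightarrow> real \<Rightarrow> ('v \<Rightarrow> 'a::euclidean_space) \<Rightarrow> 'v set set" where
  "influence_edges E eps x = {e \<in> E. \<forall>u\<in>e. \<forall>w\<in>e. norm (x u - x w) \<le> eps}"

definition hk_potential :: "'v set set \<Rightarrow> real \<Rightarrow> ('v \<Rightarrow> 'a::euclidean_space) \<Rightarrow> real" where
  "hk_potential E eps x =
     (\<Sum>e\<in>E. min ((SOME d. \<exists>u w. e = {u, w} \<and> u \<noteq> w \<and> d = (norm (x u - x w))\<^sup>2)) (eps\<^sup>2))"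

end

theory Submission
  imports Defs
begin

text \<open>Only the edges at v change their contribution to the potential. For a neighbour u that
  was within the confidence bound the contribution drops by at least
  \<open>\<parallel>x\<^sub>u - x\<^sub>v\<parallel>\<^sup>2 - \<parallel>x\<^sub>u - x\<^sub>v - m\<^sub>v\<parallel>\<^sup>2\<close> (truncation at \<open>\<epsilon>\<^sup>2\<close> can only help), and for
  the other neighbours it does not increase. Since \<open>m\<^sub>v\<close> is the mean of the offsets
  \<open>x\<^sub>u - x\<^sub>v\<close> over \<open>N\<^sub>v\<close>, a one-line inner product computation sums these drops to
  \<open>(|N\<^sub>v| + 1) \<parallel>m\<^sub>v\<parallel>\<^sup>2\<close>. If no edge of the influence network appears or disappears, every
  truncation acts the same way before and after the step, and all estimates are equalities.\<close>

definition neighbours :: "'v set set \<Rightarrow> 'v \<Rightarrow> 'v set" where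
  "neighbours E v = {u. {u, v} \<in> E}"

definition hk_edge_term :: "real \<Rightarrow> ('v \<Rightarrow> 'a::euclidean_space) \<Rightarrow> 'v set \<Rightarrow> real" where
  "hk_edge_term eps x e =
     min (SOME d. \<exists>u w. e = {u, w} \<and> u \<noteq> w \<and> d = (norm (x u - x w))\<^sup>2) (eps\<^sup>2)"

lemma hk_potential_eq_sum_edge_term: "hk_potential E eps x = (\<Sum>e\<in>E. hk_edge_term eps x e)"
  by (simp add: hk_potential_def hk_edge_term_def)

lemma hk_edge_term_doubleton:
  assumes "u \<noteq> w"
  shows "hk_edge_term eps x {u, w} = min ((norm (x u - x w))\<^sup>2) (eps\<^sup>2)"
proof -
  have "(SOME d. \<exists>a b. {u, w} = {a, b} \<and> a \<noteq> b \<and> d = (norm (x a - x b))\<^sup>2)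
          = (norm (x u - x w))\<^sup>2"
  proof (rule some_equality)
    fix d assume "\<exists>a b. {u, w} = {a, b} \<and> a \<noteq> b \<and> d = (norm (x a - x b))\<^sup>2"
    then show "d = (norm (x u - x w))\<^sup>2"
      by (auto simp: doubleton_eq_iff norm_minus_commute)
  qed (use assms in blast)
  then show ?thesis
    by (simp add: hk_edge_term_def)
qed

lemma graph_finite_edges: "graph V E \<Longrightarrow> finite E"
  unfolding graph_def by (meson PowI finite_Pow_iff finite_subset subsetI)

lemma graph_edge_doubleton:
  assumes "graph V E" and "e \<in> E"
  obtains u w where "e = {u, w}" and "u \<noteq> w"
  using assms by (auto simp: graph_def card_2_iff)

lemma graph_finite_neighbours:
  assumes "graph V E"
  shows "finite (neighbours E v)"
proof (rule finite_subset)
  show "neighbours E v \<subseteq> V"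
    using assms by (auto simp: graph_def neighbours_def)
qed (use assms in \<open>simp add: graph_def\<close>)

lemma graph_not_self_neighbour: "graph V E \<Longrightarrow> v \<notin> neighbours E v"
  by (auto simp: graph_def neighbours_def)

lemma graph_incident_edges:
  assumes "graph V E"
  shows "{e \<in> E. v \<in> e} = (\<lambda>u. {u, v}) ` neighbours E v"
proof (intro equalityI subsetI)
  fix e assume e: "e \<in> {e \<in> E. v \<in> e}"
  then obtain u w where "e = {u, w}" "u \<noteq> w"
    using assms graph_edge_doubleton by blast
  with e show "e \<in> (\<lambda>u. {u, v}) ` neighbours E v"
    by (auto simp: neighbours_def insert_commute)
qed (auto simp: neighbours_def)

lemma hk_potential_diff_fun_upd:
  fixes x :: "'v \<Rightarrow> 'a::euclidean_space"
  assumes "graph V E"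
  shows "hk_potential E eps x - hk_potential E eps (x(v := p))
           = (\<Sum>u\<in>neighbours E v.
                min ((norm (x u - x v))\<^sup>2) (eps\<^sup>2) - min ((norm (x u - p))\<^sup>2) (eps\<^sup>2))"
proof -
  let ?I = "{e \<in> E. v \<in> e}"
  have incident: "(\<Sum>e\<in>?I. hk_edge_term eps y e)
                    = (\<Sum>u\<in>neighbours E v. min ((norm (y u - y v))\<^sup>2) (eps\<^sup>2))" for y :: "'v \<Rightarrow> 'a"
  proof -
    have inj: "inj_on (\<lambda>u. {u, v}) (neighbours E v)"
      using graph_not_self_neighbour[OF assms] by (auto simp: inj_on_def doubleton_eq_iff)
    show ?thesis
      unfolding graph_incident_edges[OF assms] sum.reindex[OF inj] o_def
      using graph_not_self_neighbour[OF assms]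
      by (intro sum.cong refl hk_edge_term_doubleton) blast
  qed
  have others: "hk_edge_term eps (x(v := p)) e = hk_edge_term eps x e" if e: "e \<in> E - ?I" for e
  proof -
    obtain u w where "e = {u, w}" "u \<noteq> w"
      using e assms graph_edge_doubleton by blast
    with e show ?thesis
      by (auto simp: hk_edge_term_doubleton)
  qed
  have split: "hk_potential E eps y
                 = (\<Sum>e\<in>?I. hk_edge_term eps y e) + (\<Sum>e\<in>E - ?I. hk_edge_term eps y e)" for y :: "'v \<Rightarrow> 'a"
    unfolding hk_potential_eq_sum_edge_term
    using sum.subset_diff[of ?I E "hk_edge_term eps y"] graph_finite_edges[OF assms] by auto
  have "(\<Sum>e\<in>E - ?I. hk_edge_term eps (x(v := p)) e) = (\<Sum>e\<in>E - ?I. hk_edge_term eps x e)"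
    using others by (rule sum.cong[OF refl])
  moreover have "(x(v := p)) u = x u" if "u \<in> neighbours E v" for u
    using that graph_not_self_neighbour[OF assms] by auto
  ultimately show ?thesis
    unfolding split[of x] split[of "x(v := p)"] incident
    by (simp add: sum_subtractf)
qed

lemma sum_norm_sq_diff_shift_mean:
  fixes a :: "'v \<Rightarrow> 'a::real_inner"
  assumes "finite N" and m: "m = (1 / (real (card N) + 1)) *\<^sub>R sum a N"
  shows "(\<Sum>u\<in>N. (norm (a u))\<^sup>2 - (norm (a u - m))\<^sup>2) = (real (card N) + 2) * (norm m)\<^sup>2"
proof -
  have sum_a: "sum a N = (real (card N) + 1) *\<^sub>R m"
    using m by simp
  have "(\<Sum>u\<in>N. (norm (a u))\<^sup>2 - (norm (a u - m))\<^sup>2) = (\<Sum>u\<in>N. 2 * (a u \<bullet> m) - (norm m)\<^sup>2)"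
    by (simp add: power2_norm_eq_inner inner_diff_left inner_diff_right inner_commute)
  also have "\<dots> = 2 * (sum a N \<bullet> m) - real (card N) * (norm m)\<^sup>2"
    by (simp add: sum_subtractf sum_distrib_left inner_sum_left)
  also have "\<dots> = (real (card N) + 2) * (norm m)\<^sup>2"
    unfolding sum_a by (simp add: power2_norm_eq_inner algebra_simps)
  finally show ?thesis .
qed

lemma min_power2_diff_ge:
  fixes r s eps :: real
  assumes "0 \<le> r" and "0 \<le> eps"
  shows "min (r\<^sup>2) (eps\<^sup>2) - min (s\<^sup>2) (eps\<^sup>2) \<ge> (if r \<le> eps then r\<^sup>2 - s\<^sup>2 else 0)"
proof (cases "r \<le> eps")
  case True
  then have "min (r\<^sup>2) (eps\<^sup>2) = r\<^sup>2"
    using assms by (simp add: power_mono)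
  with True show ?thesis
    using min.cobounded1[of "s\<^sup>2" "eps\<^sup>2"] by simp
next
  case False
  then have "min (r\<^sup>2) (eps\<^sup>2) = eps\<^sup>2"
    using assms by (simp add: power_mono)
  with False show ?thesis
    using min.cobounded2[of "s\<^sup>2" "eps\<^sup>2"] by simp
qed

lemma min_power2_diff_eq:
  fixes r s eps :: real
  assumes "0 \<le> r" and "0 \<le> s" and "0 \<le> eps" and "r \<le> eps \<longleftrightarrow> s \<le> eps"
  shows "min (r\<^sup>2) (eps\<^sup>2) - min (s\<^sup>2) (eps\<^sup>2) = (if r \<le> eps then r\<^sup>2 - s\<^sup>2 else 0)"
proof -
  have "min (t\<^sup>2) (eps\<^sup>2) = (if t \<le> eps then t\<^sup>2 else eps\<^sup>2)" if "0 \<le> t" for t :: real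
    using that assms(3) by (simp add: power_mono)
  with assms show ?thesis
    by simp
qed

lemma hk_nbhd_eq_insert:
  "hk_nbhd E eps x v = insert v {u \<in> neighbours E v. norm (x u - x v) \<le> eps}"
  by (auto simp: hk_nbhd_def neighbours_def)

lemma hk_move_gain:
  assumes "graph V E"
  shows "(\<Sum>u\<in>neighbours E v. if norm (x u - x v) \<le> eps
            then (norm (x u - x v))\<^sup>2 - (norm (x u - x v - hk_move E eps x v))\<^sup>2 else 0)
           = real (card (hk_nbhd E eps x v) + 1) * (norm (hk_move E eps x v))\<^sup>2"
proof -
  define m where "m = hk_move E eps x v"
  define N where "N = {u \<in> neighbours E v. norm (x u - x v) \<le> eps}"
  have "finite N"
    using graph_finite_neighbours[OF assms] by (simp add: N_def)
  have "v \<notin> N"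
    using graph_not_self_neighbour[OF assms] by (simp add: N_def)
  have nbhd: "hk_nbhd E eps x v = insert v N"
    by (simp add: hk_nbhd_eq_insert N_def)
  have card: "real (card (hk_nbhd E eps x v)) = real (card N) + 1"
    using \<open>finite N\<close> \<open>v \<notin> N\<close> by (simp add: nbhd)
  have sum_offsets: "(\<Sum>u\<in>hk_nbhd E eps x v. x u - x v) = (\<Sum>u\<in>N. x u - x v)"
    using \<open>finite N\<close> \<open>v \<notin> N\<close> by (simp add: nbhd)
  have "m = (1 / (real (card N) + 1)) *\<^sub>R (\<Sum>u\<in>N. x u - x v)"
    unfolding m_def hk_move_def card sum_offsets ..
  then have "(\<Sum>u\<in>N. (norm (x u - x v))\<^sup>2 - (norm (x u - x v - m))\<^sup>2)
               = (real (card N) + 2) * (norm m)\<^sup>2"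
    by (rule sum_norm_sq_diff_shift_mean[OF \<open>finite N\<close>])
  moreover have "(\<Sum>u\<in>N. (norm (x u - x v))\<^sup>2 - (norm (x u - x v - m))\<^sup>2)
      = (\<Sum>u\<in>neighbours E v. if norm (x u - x v) \<le> eps
            then (norm (x u - x v))\<^sup>2 - (norm (x u - x v - m))\<^sup>2 else 0)"
    unfolding N_def by (rule sum.inter_filter[OF graph_finite_neighbours[OF assms]])
  ultimately show ?thesis
    unfolding m_def[symmetric] using card by simp
qed

lemma doubleton_in_influence_edges_iff:
  assumes "0 \<le> eps"
  shows "{u, w} \<in> influence_edges E eps x \<longleftrightarrow> {u, w} \<in> E \<and> norm (x u - x w) \<le> eps"
  using assms by (auto simp: influence_edges_def norm_minus_commute)

theorem lemma3:
  fixes V :: "'v set" and E :: "'v set set" and eps :: real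
    and x :: "'v \<Rightarrow> 'a::euclidean_space" and v :: 'v
  assumes "graph V E" and "eps > 0" and "v \<in> V"
  shows "(hk_potential E eps x - hk_potential E eps (hk_update E eps x v)
           \<ge> real (card (hk_nbhd E eps x v) + 1) * (norm (hk_move E eps x v))\<^sup>2)
     \<and> (influence_edges E eps (hk_update E eps x v) = influence_edges E eps x \<longrightarrow>
         hk_potential E eps x - hk_potential E eps (hk_update E eps x v)
           = real (card (hk_nbhd E eps x v) + 1) * (norm (hk_move E eps x v))\<^sup>2)"
proof -
  define m where "m = hk_move E eps x v"
  define x' where "x' = hk_update E eps x v"
  define decrease where "decrease u = min ((norm (x u - x v))\<^sup>2) (eps\<^sup>2)
                                      - min ((norm (x u - x v - m))\<^sup>2) (eps\<^sup>2)" for u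
  define gain where "gain u = (if norm (x u - x v) \<le> eps
                                 then (norm (x u - x v))\<^sup>2 - (norm (x u - x v - m))\<^sup>2 else 0)" for u
  have update: "x' = x(v := x v + m)"
    by (simp add: x'_def m_def hk_update_def)
  have potential_diff: "hk_potential E eps x - hk_potential E eps x' = sum decrease (neighbours E v)"
    unfolding update decrease_def diff_diff_eq by (rule hk_potential_diff_fun_upd[OF assms(1)])
  have total_gain: "sum gain (neighbours E v) = real (card (hk_nbhd E eps x v) + 1) * (norm m)\<^sup>2"
    unfolding gain_def m_def by (rule hk_move_gain[OF assms(1)])
  have "sum gain (neighbours E v) \<le> sum decrease (neighbours E v)"
    using assms(2) by (intro sum_mono) (simp add: gain_def decrease_def min_power2_diff_ge)
  moreover have "sum decrease (neighbours E v) = sum gain (neighbours E v)"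
    if unchanged: "influence_edges E eps x' = influence_edges E eps x"
  proof (rule sum.cong)
    fix u assume u: "u \<in> neighbours E v"
    then have "u \<noteq> v"
      using graph_not_self_neighbour[OF assms(1)] by blast
    have "{u, v} \<in> E"
      using u by (simp add: neighbours_def)
    then have "norm (x' u - x' v) \<le> eps \<longleftrightarrow> norm (x u - x v) \<le> eps"
      using unchanged assms(2) doubleton_in_influence_edges_iff[of eps u v E x]
        doubleton_in_influence_edges_iff[of eps u v E x'] by simp
    then have "norm (x u - x v - m) \<le> eps \<longleftrightarrow> norm (x u - x v) \<le> eps"
      using \<open>u \<noteq> v\<close> by (simp add: update diff_diff_eq)
    then show "decrease u = gain u"
      using assms(2) by (simp add: decrease_def gain_def min_power2_diff_eq)
  qed simp
  ultimately show ?thesis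
    using potential_diff total_gain by (simp add: m_def x'_def)
qed

end
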